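(* Let $\mathbf{X}=(\mathbf{x}^1,\dots,\mathbf{x}^n)\in\mathbb{R}^{n\times T\times q}$ and $\mathbf{X}'=(\mathbf{x}'^1,\dots,\mathbf{x}'^{n'})\in\mathbb{R}^{n'\times T'\times q}$ be time series datasets with sample weights $\mathbf{w}\in\Delta_n$, $\mathbf{w}'\in\Delta_{n'}$, and let $\mathbf{Y}=(y_1,\dots,y_n)\in\mathcal{C}^n$ be class labels of the samples of $\mathbf{X}$, with $\mathcal{C}$ a finite set of classes. Let $\mathrm{cost}(\mathrm{OT}_{\mathrm{DTW}}(\mathbf{X},\mathbf{X}'))$, $\mathrm{cost}(|\mathcal{C}|\text{-MAD}(\mathbf{X},\mathbf{X}',\mathbf{Y}))$ and $\mathrm{cost}(\mathrm{MAD}(\mathbf{X},\mathbf{X}'))$ denote the optimal values of the three optimization problems defined in the context. Then $$\mathrm{cost}(\mathrm{OT}_{\mathrm{DTW}}(\mathbf{X},\mathbf{X}'))\le \mathrm{cost}(|\mathcal{C}|\text{-MAD}(\mathbf{X},\mathbf{X}',\mathbf{Y}))\le \mathrm{cost}(\mathrm{MAD}(\mathbf{X},\mathbf{X}')).$$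
   Context: Here $\Delta_n$ is the probability simplex in $\mathbb{R}^n$, and $\mathbf{x}^i_t\in\mathbb{R}^q$ is the $t$-th time step of the $i$-th series. The set of couplings is $\Gamma(\mathbf{w},\mathbf{w}')=\{\boldsymbol\gamma\in\mathbb{R}_{\ge0}^{n\times n'}:\boldsymbol\gamma\mathbf{1}_{n'}=\mathbf{w},\ \boldsymbol\gamma^\top\mathbf{1}_n=\mathbf{w}'\}$. $\mathcal{A}(T,T')$ is the set of admissible DTW alignments. These are binary matrices $\boldsymbol\pi\in\{0,1\}^{T\times T'}$ whose nonzero entries form a path from $(1,1)$ to $(T,T')$ using only steps $(1,0)$, $(0,1)$ or $(1,1)$. The ground cost tensor is $\mathbf{L}(\mathbf{X},\mathbf{X}')$, with entries $L^{i,j}_{t,t'}=\|\mathbf{x}^i_t-\mathbf{x}'^j_{t'}\|_2^2$. For $\boldsymbol\pi\in\mathbb{R}^{T\times T'}$, $\mathbf{L}\otimes\boldsymbol\pi$ is the $n\times n'$ matrix with entries $(\mathbf{L}\otimes\boldsymbol\pi)_{ij}=\sum_{t,t'}L^{i,j}_{t,t'}\pi_{tt'}$. Also $\mathrm{DTW}(\mathbf{x}^i,\mathbf{x}'^j)=\min_{\boldsymbol\pi\in\mathcal{A}(T,T')}\sum_{t,t'}L^{i,j}_{t,t'}\pi_{tt'}$. The three problems are: - $\mathrm{OT}_{\mathrm{DTW}}(\mathbf{X},\mathbf{X}')$ is $\min_{\boldsymbol\gamma\in\Gamma(\mathbf{w},\mathbf{w}')}\sum_{i,j}\gamma_{ij}\,\mathrm{DTW}(\mathbf{x}^i,\mathbf{x}'^j)$.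 - $\mathrm{MAD}(\mathbf{X},\mathbf{X}')$ is $\min_{\boldsymbol\gamma\in\Gamma(\mathbf{w},\mathbf{w}'),\ \boldsymbol\pi\in\mathcal{A}(T,T')}\langle\mathbf{L}(\mathbf{X},\mathbf{X}')\otimes\boldsymbol\pi,\boldsymbol\gamma\rangle$, where $\langle\cdot,\cdot\rangle$ is the Frobenius inner product. - $|\mathcal{C}|\text{-MAD}(\mathbf{X},\mathbf{X}',\mathbf{Y})$ is $\min\sum_{i,j}\gamma_{ij}\sum_{t,t'}L^{i,j}_{t,t'}\pi^{(y_i)}_{tt'}$. The minimum is over $\boldsymbol\gamma\in\Gamma(\mathbf{w},\mathbf{w}')$ and one alignment $\boldsymbol\pi^{(c)}\in\mathcal{A}(T,T')$ per class $c\in\mathcal{C}$. *)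

theory Defs
  imports "HOL-Analysis.Analysis"
begin

text \<open>Indices are 0-based: samples 0..<n, time steps 0..<T, features are the
  coordinates of a vector in real^'q.  A dataset is a function
  X :: nat => nat => real^'q, X i t = t-th time step of the i-th series.\<close>

definition prob_simplex :: "nat \<Rightarrow> (nat \<Rightarrow> real) \<Rightarrow> bool" where
  "prob_simplex n w \<longleftrightarrow> (\<forall>i<n. 0 \<le> w i) \<and> (\<Sum>i<n. w i) = 1"

definition couplings :: "nat \<Rightarrow> nat \<Rightarrow> (nat \<Rightarrow> real) \<Rightarrow> (nat \<Rightarrow> real)
    \<Rightarrow> (nat \<Rightarrow> nat \<Rightarrow> real) set" where
  "couplings n n' w w' = {\<gamma>.
     (\<forall>i j. 0 \<le> \<gamma> i j) \<and> (\<forall>i j. (i \<ge> n \<or> j \<ge> n') \<longrightarrow> \<gamma> i j = 0) \<and>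
     (\<forall>i<n. (\<Sum>j<n'. \<gamma> i j) = w i) \<and> (\<forall>j<n'. (\<Sum>i<n. \<gamma> i j) = w' j)}"

definition dtw_path :: "nat \<Rightarrow> nat \<Rightarrow> (nat \<times> nat) list \<Rightarrow> bool" where
  "dtw_path T T' p \<longleftrightarrow> p \<noteq> [] \<and> hd p = (0, 0) \<and> last p = (T - 1, T' - 1) \<and>
     (\<forall>k. Suc k < length p \<longrightarrow>
        (fst (p ! Suc k), snd (p ! Suc k)) \<in>
          {(fst (p ! k) + 1, snd (p ! k)), (fst (p ! k), snd (p ! k) + 1),
           (fst (p ! k) + 1, snd (p ! k) + 1)})"

definition alignments :: "nat \<Rightarrow> nat \<Rightarrow> (nat \<Rightarrow> nat \<Rightarrow> real) set" where
  "alignments T T' = {\<pi>. \<exists>p. dtw_path T T' p \<and>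
       \<pi> = (\<lambda>t t'. if (t, t') \<in> set p then 1 else 0)}"

definition ground_cost :: "(nat \<Rightarrow> nat \<Rightarrow> real^'q) \<Rightarrow> (nat \<Rightarrow> nat \<Rightarrow> real^'q)
    \<Rightarrow> nat \<Rightarrow> nat \<Rightarrow> nat \<Rightarrow> nat \<Rightarrow> real" where
  "ground_cost X X' i j t t' = (norm (X i t - X' j t'))\<^sup>2"

definition align_cost :: "nat \<Rightarrow> nat \<Rightarrow> (nat \<Rightarrow> nat \<Rightarrow> real^'q) \<Rightarrow> (nat \<Rightarrow> nat \<Rightarrow> real^'q)
    \<Rightarrow> nat \<Rightarrow> nat \<Rightarrow> (nat \<Rightarrow> nat \<Rightarrow> real) \<Rightarrow> real" where
  "align_cost T T' X X' i j \<pi> = (\<Sum>t<T. \<Sum>t'<T'. ground_cost X X' i j t t' * \<pi> t t')"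

definition DTW :: "nat \<Rightarrow> nat \<Rightarrow> (nat \<Rightarrow> nat \<Rightarrow> real^'q) \<Rightarrow> (nat \<Rightarrow> nat \<Rightarrow> real^'q)
    \<Rightarrow> nat \<Rightarrow> nat \<Rightarrow> real" where
  "DTW T T' X X' i j = Inf (align_cost T T' X X' i j ` alignments T T')"

definition OT_DTW_cost :: "nat \<Rightarrow> nat \<Rightarrow> nat \<Rightarrow> nat \<Rightarrow> (nat \<Rightarrow> nat \<Rightarrow> real^'q)
    \<Rightarrow> (nat \<Rightarrow> nat \<Rightarrow> real^'q) \<Rightarrow> (nat \<Rightarrow> real) \<Rightarrow> (nat \<Rightarrow> real) \<Rightarrow> real" where
  "OT_DTW_cost n n' T T' X X' w w' =
     Inf ((\<lambda>\<gamma>. \<Sum>i<n. \<Sum>j<n'. \<gamma> i j * DTW T T' X X' i j) ` couplings n n' w w')"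

definition MAD_cost :: "nat \<Rightarrow> nat \<Rightarrow> nat \<Rightarrow> nat \<Rightarrow> (nat \<Rightarrow> nat \<Rightarrow> real^'q)
    \<Rightarrow> (nat \<Rightarrow> nat \<Rightarrow> real^'q) \<Rightarrow> (nat \<Rightarrow> real) \<Rightarrow> (nat \<Rightarrow> real) \<Rightarrow> real" where
  "MAD_cost n n' T T' X X' w w' =
     Inf ((\<lambda>(\<gamma>, \<pi>). \<Sum>i<n. \<Sum>j<n'. align_cost T T' X X' i j \<pi> * \<gamma> i j)
          ` (couplings n n' w w' \<times> alignments T T'))"

definition CMAD_cost :: "nat \<Rightarrow> nat \<Rightarrow> nat \<Rightarrow> nat \<Rightarrow> (nat \<Rightarrow> nat \<Rightarrow> real^'q)
    \<Rightarrow> (nat \<Rightarrow> nat \<Rightarrow> real^'q) \<Rightarrow> (nat \<Rightarrow> real) \<Rightarrow> (nat \<Rightarrow> real)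
    \<Rightarrow> 'c set \<Rightarrow> (nat \<Rightarrow> 'c) \<Rightarrow> real" where
  "CMAD_cost n n' T T' X X' w w' C Y =
     Inf ((\<lambda>(\<gamma>, Pc). \<Sum>i<n. \<Sum>j<n'. \<gamma> i j * align_cost T T' X X' i j (Pc (Y i)))
          ` (couplings n n' w w' \<times> {Pc. \<forall>c\<in>C. Pc c \<in> alignments T T'}))"

end

theory Submission
  imports Defs
begin

text \<open>Both inequalities are relaxations.  For a fixed coupling, the |C|-MAD objective
  dominates the OT-DTW objective termwise, because each DTW value is the least alignment
  cost; and a MAD objective value is the |C|-MAD value of the class map assigning the same
  alignment to every class.  Nonnegativity bounds all objective sets from below, and the
  staircase warping path together with the product coupling makes them nonempty.\<close>

lemma staircase_dtw_path:
  assumes "1 \<le> T" "1 \<le> T'"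
  shows "dtw_path T T' (map (\<lambda>k. (min k (T - 1), k - (T - 1))) [0..<T + T' - 1])"
proof -
  let ?f = "\<lambda>k::nat. (min k (T - 1), k - (T - 1))"
  have nonempty: "[0..<T + T' - 1] \<noteq> []" using assms by simp
  have "last (map ?f [0..<T + T' - 1]) = ?f (T + T' - 2)"
    using assms by (simp add: last_map nonempty)
  also have "\<dots> = (T - 1, T' - 1)" using assms by auto
  finally have "last (map ?f [0..<T + T' - 1]) = (T - 1, T' - 1)" .
  moreover have "hd (map ?f [0..<T + T' - 1]) = (0, 0)"
    using assms by (simp add: hd_map nonempty)
  ultimately show ?thesis
    unfolding dtw_path_def using nonempty by (auto simp: min_def)
qed

lemma alignments_nonempty:
  assumes "1 \<le> T" "1 \<le> T'"
  shows "alignments T T' \<noteq> {}"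
  using staircase_dtw_path[OF assms] unfolding alignments_def by blast

lemma alignment_nonneg: "\<pi> \<in> alignments T T' \<Longrightarrow> 0 \<le> \<pi> t t'"
  unfolding alignments_def by auto

lemma align_cost_nonneg: "\<pi> \<in> alignments T T' \<Longrightarrow> 0 \<le> align_cost T T' X X' i j \<pi>"
  unfolding align_cost_def ground_cost_def
  by (intro sum_nonneg mult_nonneg_nonneg) (auto intro: alignment_nonneg)

lemma DTW_nonneg:
  assumes "1 \<le> T" "1 \<le> T'"
  shows "0 \<le> DTW T T' X X' i j"
  unfolding DTW_def using alignments_nonempty[OF assms]
  by (intro cInf_greatest) (auto intro: align_cost_nonneg)

lemma DTW_le_align_cost:
  "\<pi> \<in> alignments T T' \<Longrightarrow> DTW T T' X X' i j \<le> align_cost T T' X X' i j \<pi>"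
  unfolding DTW_def
  by (rule cInf_lower) (auto intro: align_cost_nonneg simp: bdd_below_def)

lemma product_coupling_in_couplings:
  assumes "prob_simplex n w" "prob_simplex n' w'"
  shows "(\<lambda>i j. if i < n \<and> j < n' then w i * w' j else 0) \<in> couplings n n' w w'"
  using assms unfolding couplings_def prob_simplex_def
  by (auto simp: sum_distrib_left[symmetric] sum_distrib_right[symmetric])

lemma coupling_nonneg: "\<gamma> \<in> couplings n n' w w' \<Longrightarrow> 0 \<le> \<gamma> i j"
  unfolding couplings_def by auto

lemma OT_DTW_cost_le_per_sample_alignment_cost:
  assumes "1 \<le> T" "1 \<le> T'"
    and \<gamma>: "\<gamma> \<in> couplings n n' w w'" and P: "\<forall>i<n. P i \<in> alignments T T'"
  shows "OT_DTW_cost n n' T T' X X' w w'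
    \<le> (\<Sum>i<n. \<Sum>j<n'. \<gamma> i j * align_cost T T' X X' i j (P i))"
proof -
  have "bdd_below ((\<lambda>\<gamma>. \<Sum>i<n. \<Sum>j<n'. \<gamma> i j * DTW T T' X X' i j) ` couplings n n' w w')"
    using DTW_nonneg[OF assms(1,2)]
    by (intro bdd_belowI[where m = 0])
       (auto intro!: sum_nonneg mult_nonneg_nonneg intro: coupling_nonneg)
  with \<gamma> have "OT_DTW_cost n n' T T' X X' w w' \<le> (\<Sum>i<n. \<Sum>j<n'. \<gamma> i j * DTW T T' X X' i j)"
    unfolding OT_DTW_cost_def by (intro cInf_lower) auto
  also have "\<dots> \<le> (\<Sum>i<n. \<Sum>j<n'. \<gamma> i j * align_cost T T' X X' i j (P i))"
    using P coupling_nonneg[OF \<gamma>]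
    by (intro sum_mono mult_left_mono DTW_le_align_cost) auto
  finally show ?thesis .
qed

lemma CMAD_cost_le_MAD_objective:
  assumes labels: "\<forall>i<n. Y i \<in> C"
    and \<gamma>: "\<gamma> \<in> couplings n n' w w'" and \<pi>: "\<pi> \<in> alignments T T'"
  shows "CMAD_cost n n' T T' X X' w w' C Y
    \<le> (\<Sum>i<n. \<Sum>j<n'. align_cost T T' X X' i j \<pi> * \<gamma> i j)"
  unfolding CMAD_cost_def
proof (rule cInf_lower)
  show "(\<Sum>i<n. \<Sum>j<n'. align_cost T T' X X' i j \<pi> * \<gamma> i j)
    \<in> (\<lambda>(\<gamma>, Pc). \<Sum>i<n. \<Sum>j<n'. \<gamma> i j * align_cost T T' X X' i j (Pc (Y i)))
        ` (couplings n n' w w' \<times> {Pc. \<forall>c\<in>C. Pc c \<in> alignments T T'})"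
    using \<gamma> \<pi> by (auto simp: mult.commute intro!: image_eqI[of _ _ "(\<gamma>, \<lambda>_. \<pi>)"])
  show "bdd_below ((\<lambda>(\<gamma>, Pc). \<Sum>i<n. \<Sum>j<n'. \<gamma> i j * align_cost T T' X X' i j (Pc (Y i)))
        ` (couplings n n' w w' \<times> {Pc. \<forall>c\<in>C. Pc c \<in> alignments T T'}))"
    using labels
    by (intro bdd_belowI[where m = 0])
       (auto intro!: sum_nonneg mult_nonneg_nonneg intro: coupling_nonneg align_cost_nonneg)
qed

theorem mainTheorem1:
  fixes n n' T T' :: nat
    and X X' :: "nat \<Rightarrow> nat \<Rightarrow> real^'q"
    and w w' :: "nat \<Rightarrow> real"
    and C :: "'c set" and Y :: "nat \<Rightarrow> 'c"
  assumes "1 \<le> T" and "1 \<le> T'"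
    and "prob_simplex n w" and "prob_simplex n' w'"
    and "finite C" and "\<forall>i<n. Y i \<in> C"
  shows "OT_DTW_cost n n' T T' X X' w w' \<le> CMAD_cost n n' T T' X X' w w' C Y
       \<and> CMAD_cost n n' T T' X X' w w' C Y \<le> MAD_cost n n' T T' X X' w w'"
proof
  obtain \<pi> where \<pi>: "\<pi> \<in> alignments T T'"
    using alignments_nonempty[OF assms(1,2)] by blast
  note \<gamma> = product_coupling_in_couplings[OF assms(3,4)]
  show "OT_DTW_cost n n' T T' X X' w w' \<le> CMAD_cost n n' T T' X X' w w' C Y"
    unfolding CMAD_cost_def
    using \<gamma> \<pi> assms(6)
    by (intro cInf_greatest)
       (auto intro!: OT_DTW_cost_le_per_sample_alignment_cost[OF assms(1,2)]
             intro: exI[of _ "\<lambda>_. \<pi>"])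
  show "CMAD_cost n n' T T' X X' w w' C Y \<le> MAD_cost n n' T T' X X' w w'"
    unfolding MAD_cost_def
    using \<gamma> \<pi> assms(6)
    by (intro cInf_greatest) (auto intro: CMAD_cost_le_MAD_objective)
qed

end
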